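(* Let $N_b, N_g, L, M, P$ be positive integers. For $\ell=1,\dots,L$ let $\mathbf{L}_\ell\in\mathbb{R}^{2N_b\times 2N_b}$ be symmetric, $\mathbf{a}_\ell\in\mathbb{R}^{2N_g}$, $\mathbf{b}_\ell\in\mathbb{R}^{P}$; for $m=1,\dots,M$ let $\mathbf{M}_m\in\mathbb{R}^{2N_b\times 2N_b}$ be symmetric, $\mathbf{d}_m\in\mathbb{R}^P$, $f_m\in\mathbb{R}$; and let $\mathbf{a}_0\in\mathbb{R}^{2N_g}$. For a parameter $\boldsymbol{\theta}\in\mathbb{R}^P$ consider the parametric quadratically constrained quadratic program $$\min_{\mathbf{v}\in\mathbb{R}^{2N_b},\,\mathbf{x}_g\in\mathbb{R}^{2N_g}}\ \mathbf{a}_0^\top\mathbf{x}_g\quad\text{s.t.}\quad \mathbf{v}^\top\mathbf{L}_\ell\mathbf{v}=\mathbf{a}_\ell^\top\mathbf{x}_g+\mathbf{b}_\ell^\top\boldsymbol{\theta}\ (\ell=1,\dots,L),\qquad \mathbf{v}^\top\mathbf{M}_m\mathbf{v}\le \mathbf{d}_m^\top\boldsymbol{\theta}+f_m\ (m=1,\dots,M),$$ with multipliers $\lambda_\ell$ for the equality constraints and $\mu_m$ for the inequality constraints. Let $(\mathbf{v},\mathbf{x}_g,\boldsymbol{\lambda},\boldsymbol{\mu})$ be a tuple of (locally) optimal primal/dual variables for a given $\boldsymbol{\theta}$, satisfying the first-order optimality conditions: primal feasibility, $\mathbf{Z}\mathbf{v}=\mathbf{0}$ with $\mathbf{Z}:=\sum_{\ell=1}^L\lambda_\ell\mathbf{L}_\ell+\sum_{m=1}^M\mu_m\mathbf{M}_m$,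 $\mathbf{a}_0=\sum_{\ell=1}^L\lambda_\ell\mathbf{a}_\ell$, $\mu_m g_m=0$ and $\mu_m\ge 0$ for all $m$, where $g_m:=\mathbf{v}^\top\mathbf{M}_m\mathbf{v}-\mathbf{d}_m^\top\boldsymbol{\theta}-f_m$. Assume: (i) (strict complementarity) for every $m$, $g_m=0$ if and only if $\mu_m>0$; (ii) (second-order condition) with $\mathcal{A}:=\{m: g_m=0\}$, $\nabla_{\mathbf{x}}h_\ell:=\begin{bmatrix}2\mathbf{L}_\ell\mathbf{v}\\-\mathbf{a}_\ell\end{bmatrix}$, $\nabla_{\mathbf{x}}g_m:=\begin{bmatrix}2\mathbf{M}_m\mathbf{v}\\\mathbf{0}\end{bmatrix}$, $\nabla^2_{\mathbf{x}\mathbf{x}}\mathcal{L}:=\begin{bmatrix}\mathbf{Z}&\mathbf{0}\\\mathbf{0}&\mathbf{0}\end{bmatrix}$ and $\mathcal{Z}:=\{\mathbf{z}\in\mathbb{R}^{2N_b+2N_g}:\mathbf{z}^\top\nabla_{\mathbf{x}}h_\ell=0\ \forall\ell,\ \mathbf{z}^\top\nabla_{\mathbf{x}}g_m=0\ \forall m\in\mathcal{A}\}$, it holds that $\mathbf{z}^\top\nabla^2_{\mathbf{x}\mathbf{x}}\mathcal{L}\,\mathbf{z}>0$ for all $\mathbf{z}\in\mathcal{Z}\setminus\{\mathbf{0}\}$. Define the square matrix of size $2N_b+2N_g+L+M$ $$\mathbf{S}:=\begin{bmatrix}\mathbf{Z}&\mathbf{0}&\mathbf{L}_\lambda&\mathbf{M}_\mu\\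 \mathbf{0}&\mathbf{0}&\mathbf{A}^\top&\mathbf{0}\\ 2\mathbf{L}_\lambda^\top&-\mathbf{A}&\mathbf{0}&\mathbf{0}\\ 2\mathcal{D}(\boldsymbol{\mu})\mathbf{M}_\mu^\top&\mathbf{0}&\mathbf{0}&\mathcal{D}(\mathbf{g})\end{bmatrix},$$ where $\mathbf{L}_\lambda:=\sum_{\ell=1}^L\mathbf{L}_\ell\mathbf{v}\mathbf{e}_\ell^\top\in\mathbb{R}^{2N_b\times L}$, $\mathbf{M}_\mu:=\sum_{m=1}^M\mathbf{M}_m\mathbf{v}\mathbf{e}_m^\top\in\mathbb{R}^{2N_b\times M}$, $\mathbf{A}\in\mathbb{R}^{L\times 2N_g}$ is the matrix whose $\ell$-th row is $\mathbf{a}_\ell^\top$, $\mathbf{g}:=(g_1,\dots,g_M)$, and $\mathcal{D}(\cdot)$ denotes the diagonal matrix with the given vector on its diagonal. Then for every $\mathbf{n}\in\operatorname{null}(\mathbf{S})$, the entries $n_i$ for $i=1,\dots,2(N_b+N_g)$ are zero.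
   Context: This problem is an abstraction of the AC optimal power flow: $\mathbf{v}$ stacks real and imaginary parts of bus voltages, $\mathbf{x}_g$ stacks generator active/reactive power injections, and $\boldsymbol{\theta}$ stacks inflexible load demands. $\mathbf{e}_k$ denotes the $k$-th canonical basis vector of appropriate dimension. The conclusion means that the first $2(N_b+N_g)$ coordinates (those corresponding to $(\mathbf{v},\mathbf{x}_g)$) of any vector in the null space of $\mathbf{S}$ vanish, so that the primal sensitivities obtained from the linear system $\mathbf{S}\boldsymbol{\gamma}=\mathbf{u}$ are uniquely determined even when $\mathbf{S}$ is singular. *)

theory Defs
  imports Complex_Main "Jordan_Normal_Form.Matrix" "Jordan_Normal_Form.Matrix_Kernel"
begin

(* Indices are 0-based: l < L, m < M, instead of 1..L, 1..M. *)

definition gcon :: "(nat \<Rightarrow> real mat) \<Rightarrow> (nat \<Rightarrow> real vec) \<Rightarrow> (nat \<Rightarrow> real)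
    \<Rightarrow> real vec \<Rightarrow> real vec \<Rightarrow> nat \<Rightarrow> real" where
  "gcon Mm d f v theta m = v \<bullet> (Mm m *\<^sub>v v) - d m \<bullet> theta - f m"

definition feasible :: "nat \<Rightarrow> nat \<Rightarrow> (nat \<Rightarrow> real mat) \<Rightarrow> (nat \<Rightarrow> real vec) \<Rightarrow> (nat \<Rightarrow> real vec)
    \<Rightarrow> (nat \<Rightarrow> real mat) \<Rightarrow> (nat \<Rightarrow> real vec) \<Rightarrow> (nat \<Rightarrow> real)
    \<Rightarrow> real vec \<Rightarrow> real vec \<Rightarrow> real vec \<Rightarrow> bool" where
  "feasible L M Lm a b Mm d f theta v xg \<longleftrightarrow>
     (\<forall>l<L. v \<bullet> (Lm l *\<^sub>v v) = a l \<bullet> xg + b l \<bullet> theta) \<and>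
     (\<forall>m<M. v \<bullet> (Mm m *\<^sub>v v) \<le> d m \<bullet> theta + f m)"

definition Zmat :: "nat \<Rightarrow> nat \<Rightarrow> nat \<Rightarrow> (nat \<Rightarrow> real mat) \<Rightarrow> (nat \<Rightarrow> real mat)
    \<Rightarrow> real vec \<Rightarrow> real vec \<Rightarrow> real mat" where
  "Zmat n L M Lm Mm lam mu = mat n n (\<lambda>(i,j).
      (\<Sum>l<L. lam $ l * Lm l $$ (i,j)) + (\<Sum>m<M. mu $ m * Mm m $$ (i,j)))"

definition colmat :: "nat \<Rightarrow> nat \<Rightarrow> (nat \<Rightarrow> real mat) \<Rightarrow> real vec \<Rightarrow> real mat" where
  "colmat n K Q v = mat n K (\<lambda>(i,k). (Q k *\<^sub>v v) $ i)"

definition rowmat :: "nat \<Rightarrow> nat \<Rightarrow> (nat \<Rightarrow> real vec) \<Rightarrow> real mat" where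
  "rowmat L n a = mat L n (\<lambda>(l,k). a l $ k)"

definition Dmat :: "real vec \<Rightarrow> real mat" where
  "Dmat x = mat (dim_vec x) (dim_vec x) (\<lambda>(i,j). if i = j then x $ i else 0)"

definition Smat :: "nat \<Rightarrow> nat \<Rightarrow> nat \<Rightarrow> nat \<Rightarrow> (nat \<Rightarrow> real mat) \<Rightarrow> (nat \<Rightarrow> real vec)
    \<Rightarrow> (nat \<Rightarrow> real mat) \<Rightarrow> (nat \<Rightarrow> real vec) \<Rightarrow> (nat \<Rightarrow> real)
    \<Rightarrow> real vec \<Rightarrow> real vec \<Rightarrow> real vec \<Rightarrow> real vec \<Rightarrow> real mat" where
  "Smat Nb Ng L M Lm a Mm d f theta v lam mu =
    (let n1 = 2 * Nb; n2 = 2 * Ng;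
         Z = Zmat n1 L M Lm Mm lam mu;
         Ll = colmat n1 L Lm v;
         Mu = colmat n1 M Mm v;
         A = rowmat L n2 a;
         g = vec M (gcon Mm d f v theta)
     in four_block_mat
          (four_block_mat Z (0\<^sub>m n1 n2) (0\<^sub>m n2 n1) (0\<^sub>m n2 n2))
          (four_block_mat Ll Mu (transpose_mat A) (0\<^sub>m n2 M))
          (four_block_mat (2 \<cdot>\<^sub>m transpose_mat Ll) (- A)
                          (2 \<cdot>\<^sub>m (Dmat mu * transpose_mat Mu)) (0\<^sub>m M n2))
          (four_block_mat (0\<^sub>m L L) (0\<^sub>m L M) (0\<^sub>m M L) (Dmat g)))"

end

theory Submission
  imports Defs
begin

(* Split a kernel vector of S along its blocks as (n1, n2, n3, n4), so that x = (n1, n2) is its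
   (v, x_g) part. Read entrywise, the last block row says 2 mu_m (M_m v)^T n1 + g_m (n4)_m = 0;
   by strict complementarity exactly one of mu_m, g_m vanishes, hence (M_m v)^T n1 = 0 for every
   active constraint and ((M_m v)^T n1) (n4)_m = 0 for every m. The third block row says that x is
   orthogonal to every gradient of h_l, so x lies in the critical cone. Testing the first block row
   against n1 and using the second and third rows gives n1^T Z n1 = 0, i.e. x has zero curvature
   for the Hessian of the Lagrangian, and the second-order condition forces x = 0. *)

lemma zero_mat_mult_vec [simp]:
  "w \<in> carrier_vec nc \<Longrightarrow> 0\<^sub>m nr nc *\<^sub>v w = (0\<^sub>v nr :: 'a :: semiring_0 vec)"
  by (intro eq_vecI) (auto simp: scalar_prod_def)

lemma smult_mat_mult_vec:
  fixes A :: "'a :: comm_ring mat"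
  shows "w \<in> carrier_vec (dim_col A) \<Longrightarrow> (k \<cdot>\<^sub>m A) *\<^sub>v w = k \<cdot>\<^sub>v (A *\<^sub>v w)"
  by (intro eq_vecI) (auto simp: scalar_prod_def sum_distrib_left ac_simps)

lemma zero_vec_append: "0\<^sub>v (p + q) = 0\<^sub>v p @\<^sub>v (0\<^sub>v q :: 'a :: zero vec)"
  by (intro eq_vecI) auto

lemma append_vec_eq_zero_iff:
  "x \<in> carrier_vec p \<Longrightarrow> x @\<^sub>v y = 0\<^sub>v (p + q) \<longleftrightarrow> x = 0\<^sub>v p \<and> y = (0\<^sub>v q :: 'a :: zero vec)"
  by (simp add: zero_vec_append)

lemma eq_of_add_uminus_vec_eq_zero:
  fixes x y :: "'a :: ab_group_add vec"
  assumes "x + - y = 0\<^sub>v n" "x \<in> carrier_vec n" "y \<in> carrier_vec n"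
  shows "x = y"
proof (rule eq_vecI)
  fix i
  assume "i < dim_vec y"
  then show "x $ i = y $ i"
    using arg_cong[OF assms(1), of "\<lambda>u. u $ i"] assms(2,3) by simp
qed (use assms in simp)

lemma append_vec_mem_mat_kernel_four_block_mat_iff:
  fixes A :: "'a :: comm_ring_1 mat"
  assumes "A \<in> carrier_mat nr1 nc1" "B \<in> carrier_mat nr1 nc2"
    and "C \<in> carrier_mat nr2 nc1" "D \<in> carrier_mat nr2 nc2"
    and "x \<in> carrier_vec nc1" "y \<in> carrier_vec nc2"
  shows "x @\<^sub>v y \<in> mat_kernel (four_block_mat A B C D) \<longleftrightarrow>
           A *\<^sub>v x + B *\<^sub>v y = 0\<^sub>v nr1 \<and> C *\<^sub>v x + D *\<^sub>v y = 0\<^sub>v nr2"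
  using assms by (simp add: mat_kernel_def four_block_mat_mult_vec append_vec_eq_zero_iff)

lemma quadratic_form_four_block_mat_zero:
  fixes Z :: "'a :: comm_ring_1 mat"
  assumes "Z \<in> carrier_mat n n" "x \<in> carrier_vec n" "y \<in> carrier_vec k"
  shows "(x @\<^sub>v y) \<bullet> (four_block_mat Z (0\<^sub>m n k) (0\<^sub>m k n) (0\<^sub>m k k) *\<^sub>v (x @\<^sub>v y)) = x \<bullet> (Z *\<^sub>v x)"
  using assms by (simp add: mult_mat_vec_split scalar_prod_append[of x n y k])

lemma carrier_vec_append_cases:
  assumes "x \<in> carrier_vec (p + q)"
  obtains x1 x2 where "x = x1 @\<^sub>v x2" "x1 \<in> carrier_vec p" "x2 \<in> carrier_vec q"
  using assms vec_first_last_append vec_first_carrier vec_last_carrier by metis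

lemma block_kernel_quadratic_form_eq_zero:
  fixes Z B C A :: "'a :: field_char_0 mat"
  assumes carriers: "Z \<in> carrier_mat n n" "B \<in> carrier_mat n p" "C \<in> carrier_mat n q"
      "A \<in> carrier_mat p k"
    and vecs: "x1 \<in> carrier_vec n" "x2 \<in> carrier_vec k" "y1 \<in> carrier_vec p" "y2 \<in> carrier_vec q"
    and row1: "Z *\<^sub>v x1 + (B *\<^sub>v y1 + C *\<^sub>v y2) = 0\<^sub>v n"
    and row2: "transpose_mat A *\<^sub>v y1 = 0\<^sub>v k"
    and row3: "2 \<cdot>\<^sub>v (transpose_mat B *\<^sub>v x1) = A *\<^sub>v x2"
    and orth: "(transpose_mat C *\<^sub>v x1) \<bullet> y2 = 0"
  shows "x1 \<bullet> (Z *\<^sub>v x1) = 0"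
proof -
  have "2 * (x1 \<bullet> (B *\<^sub>v y1)) = (2 \<cdot>\<^sub>v (transpose_mat B *\<^sub>v x1)) \<bullet> y1"
    using carriers vecs by (simp add: transpose_vec_mult_scalar[of B n p y1 x1])
  also have "\<dots> = y1 \<bullet> (A *\<^sub>v x2)"
    unfolding row3 using carriers vecs by (simp add: comm_scalar_prod[of _ p])
  also have "\<dots> = (transpose_mat A *\<^sub>v y1) \<bullet> x2"
    using carriers vecs by (simp add: transpose_vec_mult_scalar)
  also have "\<dots> = 0"
    unfolding row2 using vecs by simp
  finally have B0: "x1 \<bullet> (B *\<^sub>v y1) = 0"
    by simp
  have C0: "x1 \<bullet> (C *\<^sub>v y2) = 0"
    using orth carriers vecs by (simp add: transpose_vec_mult_scalar[of C n q y2 x1])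
  have "0 = x1 \<bullet> (Z *\<^sub>v x1 + (B *\<^sub>v y1 + C *\<^sub>v y2))"
    unfolding row1 using vecs by simp
  also have "\<dots> = x1 \<bullet> (Z *\<^sub>v x1) + (x1 \<bullet> (B *\<^sub>v y1) + x1 \<bullet> (C *\<^sub>v y2))"
    using carriers vecs by (simp add: scalar_prod_add_distrib[of _ n])
  finally show ?thesis
    using B0 C0 by simp
qed

lemma dim_Zmat [simp]:
  "dim_row (Zmat n L M Lm Mm lam mu) = n" "dim_col (Zmat n L M Lm Mm lam mu) = n"
  by (simp_all add: Zmat_def)

lemma dim_colmat [simp]: "dim_row (colmat n K Q v) = n" "dim_col (colmat n K Q v) = K"
  by (simp_all add: colmat_def)

lemma dim_rowmat [simp]: "dim_row (rowmat L n a) = L" "dim_col (rowmat L n a) = n"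
  by (simp_all add: rowmat_def)

lemma dim_Dmat [simp]: "dim_row (Dmat x) = dim_vec x" "dim_col (Dmat x) = dim_vec x"
  by (simp_all add: Dmat_def)

lemma Dmat_mult_vec_index:
  assumes "w \<in> carrier_vec (dim_vec x)" "i < dim_vec x"
  shows "(Dmat x *\<^sub>v w) $ i = x $ i * w $ i"
proof -
  have "(Dmat x *\<^sub>v w) $ i = (\<Sum>j\<in>{0..<dim_vec x}. (if i = j then x $ i else 0) * w $ j)"
    using assms by (simp add: Dmat_def scalar_prod_def)
  also have "\<dots> = (\<Sum>j\<in>{0..<dim_vec x}. if i = j then x $ i * w $ j else 0)"
    by (rule sum.cong) auto
  finally show ?thesis
    using assms(2) by simp
qed

lemma transpose_colmat_mult_vec_index:
  assumes "k < K" "dim_row (Q k) = n"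
  shows "(transpose_mat (colmat n K Q v) *\<^sub>v w) $ k = (Q k *\<^sub>v v) \<bullet> w"
proof -
  have "col (colmat n K Q v) k = Q k *\<^sub>v v"
    using assms by (intro eq_vecI) (auto simp: colmat_def)
  then show ?thesis
    using assms(1) by (simp add: colmat_def)
qed

lemma rowmat_mult_vec_index:
  assumes "l < L" "a l \<in> carrier_vec n"
  shows "(rowmat L n a *\<^sub>v x) $ l = a l \<bullet> x"
proof -
  have "row (rowmat L n a) l = a l"
    using assms by (intro eq_vecI) (auto simp: rowmat_def)
  then show ?thesis
    using assms(1) by (simp add: rowmat_def)
qed

lemma Dmat_strict_complementarity:
  fixes \<mu> g w z :: "real vec"
  assumes carriers: "\<mu> \<in> carrier_vec q" "g \<in> carrier_vec q" "w \<in> carrier_vec q" "z \<in> carrier_vec q"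
    and eq: "2 \<cdot>\<^sub>v (Dmat \<mu> *\<^sub>v w) + Dmat g *\<^sub>v z = 0\<^sub>v q"
    and strict: "\<And>m. m < q \<Longrightarrow> g $ m = 0 \<longleftrightarrow> \<mu> $ m \<noteq> 0"
  shows "\<And>m. m < q \<Longrightarrow> g $ m = 0 \<Longrightarrow> w $ m = 0"
    and "w \<bullet> z = 0"
proof -
  have entry: "2 * (\<mu> $ m * w $ m) + g $ m * z $ m = 0" if "m < q" for m
    using arg_cong[OF eq, of "\<lambda>u. u $ m"] that carriers
    by (simp add: Dmat_mult_vec_index del: index_mult_mat_vec)
  show "w $ m = 0" if "m < q" "g $ m = 0" for m
    using entry[of m] strict[of m] that by simp
  have "w $ m * z $ m = 0" if "m < q" for m
    using entry[of m] strict[of m] that by (cases "g $ m = 0") auto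
  then show "w \<bullet> z = 0"
    using carriers by (auto simp: scalar_prod_def intro!: sum.neutral)
qed

lemma dim_col_Smat: "dim_col (Smat Nb Ng L M Lm a Mm d f theta v lam mu) = 2*Nb + 2*Ng + (L + M)"
  by (simp add: Smat_def Let_def Zmat_def colmat_def rowmat_def)

lemma Smat_kernel_equations:
  fixes Nb Ng L M :: nat and Lm Mm :: "nat \<Rightarrow> real mat" and a d :: "nat \<Rightarrow> real vec"
    and f :: "nat \<Rightarrow> real" and theta v lam mu n1 n2 n3 n4 :: "real vec"
  defines "Z \<equiv> Zmat (2*Nb) L M Lm Mm lam mu"
    and "B \<equiv> colmat (2*Nb) L Lm v" and "C \<equiv> colmat (2*Nb) M Mm v"
    and "A \<equiv> rowmat L (2*Ng) a" and "g \<equiv> vec M (gcon Mm d f v theta)"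
  assumes mu: "mu \<in> carrier_vec M"
    and vecs: "n1 \<in> carrier_vec (2*Nb)" "n2 \<in> carrier_vec (2*Ng)" "n3 \<in> carrier_vec L"
      "n4 \<in> carrier_vec M"
    and kernel: "(n1 @\<^sub>v n2) @\<^sub>v (n3 @\<^sub>v n4) \<in> mat_kernel (Smat Nb Ng L M Lm a Mm d f theta v lam mu)"
  shows "Z *\<^sub>v n1 + (B *\<^sub>v n3 + C *\<^sub>v n4) = 0\<^sub>v (2*Nb)"
    and "transpose_mat A *\<^sub>v n3 = 0\<^sub>v (2*Ng)"
    and "2 \<cdot>\<^sub>v (transpose_mat B *\<^sub>v n1) = A *\<^sub>v n2"
    and "2 \<cdot>\<^sub>v (Dmat mu *\<^sub>v (transpose_mat C *\<^sub>v n1)) + Dmat g *\<^sub>v n4 = 0\<^sub>v M"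
proof -
  have carriers: "Z \<in> carrier_mat (2*Nb) (2*Nb)" "B \<in> carrier_mat (2*Nb) L"
    "C \<in> carrier_mat (2*Nb) M" "A \<in> carrier_mat L (2*Ng)"
    "Dmat mu \<in> carrier_mat M M" "Dmat g \<in> carrier_mat M M"
    using mu by (auto simp: Z_def B_def C_def A_def g_def Zmat_def colmat_def rowmat_def)
  then have scaled_carriers: "2 \<cdot>\<^sub>m transpose_mat B \<in> carrier_mat L (2*Nb)"
    "- A \<in> carrier_mat L (2*Ng)" "2 \<cdot>\<^sub>m (Dmat mu * transpose_mat C) \<in> carrier_mat M (2*Nb)"
    by auto
  define TL where "TL = four_block_mat Z (0\<^sub>m (2*Nb) (2*Ng)) (0\<^sub>m (2*Ng) (2*Nb)) (0\<^sub>m (2*Ng) (2*Ng))"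
  define TR where "TR = four_block_mat B C (transpose_mat A) (0\<^sub>m (2*Ng) M)"
  define BL where "BL = four_block_mat (2 \<cdot>\<^sub>m transpose_mat B) (- A)
                          (2 \<cdot>\<^sub>m (Dmat mu * transpose_mat C)) (0\<^sub>m M (2*Ng))"
  define BR where "BR = four_block_mat (0\<^sub>m L L) (0\<^sub>m L M) (0\<^sub>m M L) (Dmat g)"
  have "Smat Nb Ng L M Lm a Mm d f theta v lam mu = four_block_mat TL TR BL BR"
    by (simp add: Smat_def Let_def Z_def B_def C_def A_def g_def TL_def TR_def BL_def BR_def)
  moreover have "TL \<in> carrier_mat (2*Nb + 2*Ng) (2*Nb + 2*Ng)" "TR \<in> carrier_mat (2*Nb + 2*Ng) (L + M)"
    "BL \<in> carrier_mat (L + M) (2*Nb + 2*Ng)" "BR \<in> carrier_mat (L + M) (L + M)"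
    using carriers by (auto simp: TL_def TR_def BL_def BR_def)
  ultimately have "TL *\<^sub>v (n1 @\<^sub>v n2) + TR *\<^sub>v (n3 @\<^sub>v n4) = 0\<^sub>v (2*Nb + 2*Ng)
      \<and> BL *\<^sub>v (n1 @\<^sub>v n2) + BR *\<^sub>v (n3 @\<^sub>v n4) = 0\<^sub>v (L + M)"
    using kernel vecs by (simp add: append_vec_mem_mat_kernel_four_block_mat_iff)
  then have blocks: "Z *\<^sub>v n1 + (B *\<^sub>v n3 + C *\<^sub>v n4) = 0\<^sub>v (2*Nb) \<and> transpose_mat A *\<^sub>v n3 = 0\<^sub>v (2*Ng)
      \<and> (2 \<cdot>\<^sub>m transpose_mat B) *\<^sub>v n1 + - A *\<^sub>v n2 = 0\<^sub>v L
      \<and> (2 \<cdot>\<^sub>m (Dmat mu * transpose_mat C)) *\<^sub>v n1 + Dmat g *\<^sub>v n4 = 0\<^sub>v M"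
    using carriers scaled_carriers vecs
    by (simp add: TL_def TR_def BL_def BR_def four_block_mat_mult_vec mult_mat_vec_split
        append_vec_add[of _ "2*Nb" _ _ "2*Ng"] append_vec_add[of _ L _ _ M] append_vec_eq_zero_iff)
  then show "Z *\<^sub>v n1 + (B *\<^sub>v n3 + C *\<^sub>v n4) = 0\<^sub>v (2*Nb)"
    and "transpose_mat A *\<^sub>v n3 = 0\<^sub>v (2*Ng)"
    and "2 \<cdot>\<^sub>v (Dmat mu *\<^sub>v (transpose_mat C *\<^sub>v n1)) + Dmat g *\<^sub>v n4 = 0\<^sub>v M"
    using carriers vecs by (auto simp: smult_mat_mult_vec)
  from blocks have "2 \<cdot>\<^sub>v (transpose_mat B *\<^sub>v n1) + - (A *\<^sub>v n2) = 0\<^sub>v L"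
    using carriers vecs by (simp add: smult_mat_mult_vec)
  then show "2 \<cdot>\<^sub>v (transpose_mat B *\<^sub>v n1) = A *\<^sub>v n2"
    by (rule eq_of_add_uminus_vec_eq_zero) (use carriers vecs in auto)
qed

lemma Smat_kernel_primal_part_critical:
  fixes Nb Ng L M :: nat and Lm Mm :: "nat \<Rightarrow> real mat" and a d :: "nat \<Rightarrow> real vec"
    and f :: "nat \<Rightarrow> real" and theta v lam mu n1 n2 n3 n4 :: "real vec"
  assumes Lm_dim: "\<And>l. l < L \<Longrightarrow> Lm l \<in> carrier_mat (2*Nb) (2*Nb)"
    and a_dim: "\<And>l. l < L \<Longrightarrow> a l \<in> carrier_vec (2*Ng)"
    and Mm_dim: "\<And>m. m < M \<Longrightarrow> Mm m \<in> carrier_mat (2*Nb) (2*Nb)"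
    and v_dim: "v \<in> carrier_vec (2*Nb)" and mu_dim: "mu \<in> carrier_vec M"
    and strict: "\<And>m. m < M \<Longrightarrow> gcon Mm d f v theta m = 0 \<longleftrightarrow> mu $ m \<noteq> 0"
    and n1: "n1 \<in> carrier_vec (2*Nb)" and n2: "n2 \<in> carrier_vec (2*Ng)"
    and n3: "n3 \<in> carrier_vec L" and n4: "n4 \<in> carrier_vec M"
    and kernel: "(n1 @\<^sub>v n2) @\<^sub>v (n3 @\<^sub>v n4) \<in> mat_kernel (Smat Nb Ng L M Lm a Mm d f theta v lam mu)"
  shows "\<And>l. l < L \<Longrightarrow> (n1 @\<^sub>v n2) \<bullet> ((2 \<cdot>\<^sub>v (Lm l *\<^sub>v v)) @\<^sub>v (- a l)) = 0"
    and "\<And>m. m < M \<Longrightarrow> gcon Mm d f v theta m = 0 \<Longrightarrow>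
           (n1 @\<^sub>v n2) \<bullet> ((2 \<cdot>\<^sub>v (Mm m *\<^sub>v v)) @\<^sub>v 0\<^sub>v (2*Ng)) = 0"
    and "(n1 @\<^sub>v n2) \<bullet> (four_block_mat (Zmat (2*Nb) L M Lm Mm lam mu) (0\<^sub>m (2*Nb) (2*Ng))
           (0\<^sub>m (2*Ng) (2*Nb)) (0\<^sub>m (2*Ng) (2*Ng)) *\<^sub>v (n1 @\<^sub>v n2)) = 0"
proof -
  note rows = Smat_kernel_equations[OF mu_dim n1 n2 n3 n4 kernel]
  have "transpose_mat (colmat (2*Nb) M Mm v) *\<^sub>v n1 \<in> carrier_vec M"
    by (rule carrier_vecI) simp
  note complementarity = Dmat_strict_complementarity[OF mu_dim vec_carrier this n4 rows(4)]
  show "(n1 @\<^sub>v n2) \<bullet> ((2 \<cdot>\<^sub>v (Lm l *\<^sub>v v)) @\<^sub>v (- a l)) = 0" if "l < L" for l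
  proof -
    have "2 * ((Lm l *\<^sub>v v) \<bullet> n1) = a l \<bullet> n2"
      using arg_cong[OF rows(3), of "\<lambda>u. u $ l"] that Lm_dim[OF that] a_dim[OF that]
      by (simp add: transpose_colmat_mult_vec_index rowmat_mult_vec_index del: index_mult_mat_vec)
    then show ?thesis
      using n1 n2 v_dim Lm_dim[OF that] a_dim[OF that]
      by (simp add: scalar_prod_append[of n1 "2*Nb" n2 "2*Ng"] comm_scalar_prod[of n1 "2*Nb"]
          comm_scalar_prod[of n2 "2*Ng"])
  qed
  show "(n1 @\<^sub>v n2) \<bullet> ((2 \<cdot>\<^sub>v (Mm m *\<^sub>v v)) @\<^sub>v 0\<^sub>v (2*Ng)) = 0"
    if "m < M" "gcon Mm d f v theta m = 0" for m
  proof -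
    have "(Mm m *\<^sub>v v) \<bullet> n1 = 0"
      using complementarity(1)[of m] strict that Mm_dim[OF that(1)]
      by (simp add: transpose_colmat_mult_vec_index del: index_mult_mat_vec)
    then show ?thesis
      using n1 n2 v_dim Mm_dim[OF that(1)]
      by (simp add: scalar_prod_append[of n1 "2*Nb" n2 "2*Ng"] comm_scalar_prod[of n1 "2*Nb"])
  qed
  have "n1 \<bullet> (Zmat (2*Nb) L M Lm Mm lam mu *\<^sub>v n1) = 0"
    by (rule block_kernel_quadratic_form_eq_zero[OF _ _ _ _ n1 n2 n3 n4 rows(1-3)
          complementarity(2)]) (use strict in auto)
  moreover have "Zmat (2*Nb) L M Lm Mm lam mu \<in> carrier_mat (2*Nb) (2*Nb)"
    by (rule carrier_matI) simp_all
  ultimately show "(n1 @\<^sub>v n2) \<bullet> (four_block_mat (Zmat (2*Nb) L M Lm Mm lam mu) (0\<^sub>m (2*Nb) (2*Ng))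
           (0\<^sub>m (2*Ng) (2*Nb)) (0\<^sub>m (2*Ng) (2*Ng)) *\<^sub>v (n1 @\<^sub>v n2)) = 0"
    by (simp add: quadratic_form_four_block_mat_zero[OF _ n1 n2])
qed

theorem theorem1:
  fixes Nb Ng L M P :: nat
    and Lm Mm :: "nat \<Rightarrow> real mat"
    and a b d :: "nat \<Rightarrow> real vec"
    and f :: "nat \<Rightarrow> real"
    and a0 theta v xg lam mu :: "real vec"
  assumes pos: "0 < Nb" "0 < Ng" "0 < L" "0 < M" "0 < P"
    and Lm_dim: "\<And>l. l < L \<Longrightarrow> Lm l \<in> carrier_mat (2*Nb) (2*Nb)"
    and Lm_sym: "\<And>l. l < L \<Longrightarrow> transpose_mat (Lm l) = Lm l"
    and a_dim: "\<And>l. l < L \<Longrightarrow> a l \<in> carrier_vec (2*Ng)"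
    and b_dim: "\<And>l. l < L \<Longrightarrow> b l \<in> carrier_vec P"
    and Mm_dim: "\<And>m. m < M \<Longrightarrow> Mm m \<in> carrier_mat (2*Nb) (2*Nb)"
    and Mm_sym: "\<And>m. m < M \<Longrightarrow> transpose_mat (Mm m) = Mm m"
    and d_dim: "\<And>m. m < M \<Longrightarrow> d m \<in> carrier_vec P"
    and a0_dim: "a0 \<in> carrier_vec (2*Ng)"
    and theta_dim: "theta \<in> carrier_vec P"
    and v_dim: "v \<in> carrier_vec (2*Nb)"
    and xg_dim: "xg \<in> carrier_vec (2*Ng)"
    and lam_dim: "lam \<in> carrier_vec L"
    and mu_dim: "mu \<in> carrier_vec M"
    \<comment> \<open>(local) optimality of the primal point\<close>
    and feas: "feasible L M Lm a b Mm d f theta v xg"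
    and locopt: "\<exists>\<epsilon>>0. \<forall>v' xg'. v' \<in> carrier_vec (2*Nb) \<longrightarrow> xg' \<in> carrier_vec (2*Ng) \<longrightarrow>
                   feasible L M Lm a b Mm d f theta v' xg' \<longrightarrow>
                   (v' - v) \<bullet> (v' - v) + (xg' - xg) \<bullet> (xg' - xg) < \<epsilon> \<longrightarrow>
                   a0 \<bullet> xg \<le> a0 \<bullet> xg'"
    \<comment> \<open>first-order (KKT) conditions\<close>
    and stat_v: "Zmat (2*Nb) L M Lm Mm lam mu *\<^sub>v v = 0\<^sub>v (2*Nb)"
    and stat_x: "a0 = finsum_vec TYPE(real) (2*Ng) (\<lambda>l. lam $ l \<cdot>\<^sub>v a l) {..<L}"
    and compl: "\<And>m. m < M \<Longrightarrow> mu $ m * gcon Mm d f v theta m = 0"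
    and mu_nonneg: "\<And>m. m < M \<Longrightarrow> mu $ m \<ge> 0"
    \<comment> \<open>(i) strict complementarity\<close>
    and strict: "\<And>m. m < M \<Longrightarrow> (gcon Mm d f v theta m = 0 \<longleftrightarrow> mu $ m > 0)"
    \<comment> \<open>(ii) second-order sufficient condition\<close>
    and soc: "\<And>z. z \<in> carrier_vec (2*Nb + 2*Ng) \<Longrightarrow> z \<noteq> 0\<^sub>v (2*Nb + 2*Ng) \<Longrightarrow>
              (\<forall>l<L. z \<bullet> ((2 \<cdot>\<^sub>v (Lm l *\<^sub>v v)) @\<^sub>v (- a l)) = 0) \<Longrightarrow>
              (\<forall>m<M. gcon Mm d f v theta m = 0 \<longrightarrow>
                 z \<bullet> ((2 \<cdot>\<^sub>v (Mm m *\<^sub>v v)) @\<^sub>v 0\<^sub>v (2*Ng)) = 0) \<Longrightarrow>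
              z \<bullet> (four_block_mat (Zmat (2*Nb) L M Lm Mm lam mu) (0\<^sub>m (2*Nb) (2*Ng))
                                   (0\<^sub>m (2*Ng) (2*Nb)) (0\<^sub>m (2*Ng) (2*Ng)) *\<^sub>v z) > 0"
  shows "\<forall>n \<in> mat_kernel (Smat Nb Ng L M Lm a Mm d f theta v lam mu).
           \<forall>i < 2*(Nb+Ng). n $ i = 0"
proof (intro ballI allI impI)
  fix n i
  assume n: "n \<in> mat_kernel (Smat Nb Ng L M Lm a Mm d f theta v lam mu)" and i: "i < 2*(Nb+Ng)"
  have "n \<in> carrier_vec ((2*Nb + 2*Ng) + (L + M))"
    using n by (simp add: mat_kernel_def dim_col_Smat)
  then obtain x y where n_split: "n = x @\<^sub>v y"
    and x: "x \<in> carrier_vec (2*Nb + 2*Ng)" and y: "y \<in> carrier_vec (L + M)"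
    by (rule carrier_vec_append_cases)
  obtain n1 n2 where x_split: "x = n1 @\<^sub>v n2"
    and n1: "n1 \<in> carrier_vec (2*Nb)" and n2: "n2 \<in> carrier_vec (2*Ng)"
    using x by (rule carrier_vec_append_cases)
  obtain n3 n4 where y_split: "y = n3 @\<^sub>v n4"
    and n3: "n3 \<in> carrier_vec L" and n4: "n4 \<in> carrier_vec M"
    using y by (rule carrier_vec_append_cases)
  have "gcon Mm d f v theta m = 0 \<longleftrightarrow> mu $ m \<noteq> 0" if "m < M" for m
    using strict[OF that] compl[OF that] by auto
  note critical = Smat_kernel_primal_part_critical[OF Lm_dim a_dim Mm_dim v_dim mu_dim this n1 n2 n3 n4
      n[unfolded n_split x_split y_split]]
  have "n1 @\<^sub>v n2 = 0\<^sub>v (2*Nb + 2*Ng)"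
    using soc[of "n1 @\<^sub>v n2"] critical n1 n2 by auto
  then show "n $ i = 0"
    using i n_split x_split n1 n2 by simp
qed

end
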